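(* Let $S_N$ denote the $N$-th large Schröder number and $C_N=\frac{1}{N+1}\binom{2N}{N}$ the $N$-th Catalan number. For every non-negative integer $n$, $$v_3(S_{2n+1})=v_3(C_n),\qquad v_3(S_{2n+2})=1+v_3(2n+1)+v_3(C_n).$$
   Context: The large Schröder number $S_N$ is the number of lattice paths from $(0,0)$ to $(N,N)$ using steps $(1,0)$, $(0,1)$, $(1,1)$ that never go above the diagonal $y=x$ (so $S_0=1,S_1=2,S_2=6,\dots$). $v_3(y)$ denotes the $3$-adic valuation of a nonzero integer $y$. *)

theory Defs
  imports "HOL-Computational_Algebra.Computational_Algebra"
begin

datatype step = E | N | D

fun step_vec :: "step \<Rightarrow> int \<times> int" where
  "step_vec E = (1, 0)"
| "step_vec N = (0, 1)"
| "step_vec D = (1, 1)"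

definition endpoint :: "step list \<Rightarrow> int \<times> int" where
  "endpoint ps = (sum_list (map (fst \<circ> step_vec) ps), sum_list (map (snd \<circ> step_vec) ps))"

definition schroeder_paths :: "nat \<Rightarrow> step list set" where
  "schroeder_paths n = {ps. endpoint ps = (int n, int n) \<and>
      (\<forall>k \<le> length ps. snd (endpoint (take k ps)) \<le> fst (endpoint (take k ps)))}"

definition schroeder :: "nat \<Rightarrow> nat" where
  "schroeder n = card (schroeder_paths n)"

definition catalan :: "nat \<Rightarrow> nat" where
  "catalan n = (2 * n choose n) div (n + 1)"

definition v3 :: "nat \<Rightarrow> nat" where
  "v3 y = multiplicity (3::nat) y"

end

theory Submission
  imports Defs
begin

text \<open>
  Cutting a Schroeder path at its first return to the diagonal gives
  \<open>S (n+1) = S n + (\<Sum>b\<le>n. S b * S (n-b))\<close>, i.e. \<open>F = 1 + x F + x F\<^sup>2\<close>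
  for the generating function. Completing the square,
  \<open>(1 - x - 2 x F)\<^sup>2 = 1 - 6 x + x\<^sup>2 = (1 - 3 x)\<^sup>2 (1 - 8 u\<^sup>2)\<close> with
  \<open>u = x / (1 - 3 x)\<close>, and the binomial series of the square root, whose
  coefficients are Catalan numbers, yields
  \<open>S (m+1) = (\<Sum>i\<le>m. 2^(i+1) C i (m choose 2i) 3^(m-2i))\<close>.

  For \<open>m = 2n + r\<close> with \<open>r \<in> {0,1}\<close> the term \<open>i = n\<close> has valuation
  \<open>v\<^sub>3 (C n) + r (1 + v\<^sub>3 (2n+1))\<close>, and every other term has a strictly
  larger one. Indeed, with \<open>j = n - i\<close>, the identity
  \<open>(2n choose 2i) C i (2j choose j) = C n (n choose i) (n+1 choose i+1)\<close>
  shows that the term is at least as divisible as \<open>C n\<close> up to the factor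
  \<open>(2j choose j)\<close>, whose valuation stays below the exponent \<open>2j\<close> of 3 in
  the term since \<open>(2j+1) (2j choose j) < 9^j\<close>.
\<close>

section \<open>Schroeder paths and the first-return recurrence\<close>

fun step_height :: "step \<Rightarrow> int" where
  "step_height E = 1"
| "step_height N = -1"
| "step_height D = 0"

fun step_width :: "step \<Rightarrow> nat" where
  "step_width E = 1"
| "step_width N = 0"
| "step_width D = 1"

definition path_height :: "step list \<Rightarrow> int" where
  "path_height ps = sum_list (map step_height ps)"

definition path_width :: "step list \<Rightarrow> nat" where
  "path_width ps = sum_list (map step_width ps)"

lemma path_height_simps [simp]:
  "path_height [] = 0"
  "path_height (s # ps) = step_height s + path_height ps"
  "path_height (ps @ qs) = path_height ps + path_height qs"
  by (simp_all add: path_height_def)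

lemma path_width_simps [simp]:
  "path_width [] = 0"
  "path_width (s # ps) = step_width s + path_width ps"
  "path_width (ps @ qs) = path_width ps + path_width qs"
  by (simp_all add: path_width_def)

lemma endpoint_eq_width_height: "endpoint ps = (int (path_width ps), int (path_width ps) - path_height ps)"
proof (induction ps)
  case (Cons s ps)
  then show ?case by (cases s) (auto simp: endpoint_def)
qed (simp add: endpoint_def)

fun stays_nonneg :: "int \<Rightarrow> step list \<Rightarrow> bool" where
  "stays_nonneg h [] = (0 \<le> h)"
| "stays_nonneg h (s # ps) = (0 \<le> h \<and> stays_nonneg (h + step_height s) ps)"

lemma stays_nonneg_iff_prefixes:
  "stays_nonneg h ps \<longleftrightarrow> (\<forall>k \<le> length ps. 0 \<le> h + path_height (take k ps))"
proof (induction ps arbitrary: h)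
  case (Cons s ps)
  have "(\<forall>k \<le> length (s # ps). 0 \<le> h + path_height (take k (s # ps))) \<longleftrightarrow>
        0 \<le> h \<and> (\<forall>k \<le> length ps. 0 \<le> h + step_height s + path_height (take k ps))"
    unfolding less_Suc_eq_le[symmetric] length_Cons All_less_Suc2
    by (simp add: algebra_simps less_Suc_eq_le)
  with Cons.IH show ?case by simp
qed simp

lemma stays_nonneg_append:
  "stays_nonneg h (ps @ qs) \<longleftrightarrow> stays_nonneg h ps \<and> stays_nonneg (h + path_height ps) qs"
  by (induction ps arbitrary: h) (auto simp: algebra_simps elim: stays_nonneg.elims)

lemma stays_nonneg_start: "stays_nonneg h ps \<Longrightarrow> 0 \<le> h"
  by (cases ps) auto

lemma stays_nonneg_mono: "stays_nonneg h ps \<Longrightarrow> h \<le> h' \<Longrightarrow> stays_nonneg h' ps"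
  by (induction ps arbitrary: h h') auto

lemma mem_schroeder_paths:
  "ps \<in> schroeder_paths n \<longleftrightarrow> path_width ps = n \<and> path_height ps = 0 \<and> stays_nonneg 0 ps"
  by (auto simp: schroeder_paths_def endpoint_eq_width_height stays_nonneg_iff_prefixes)

lemma length_le_path_width_height: "int (length ps) \<le> 2 * int (path_width ps) - path_height ps"
proof (induction ps)
  case (Cons s ps)
  then show ?case by (cases s) auto
qed simp

lemma finite_schroeder_paths: "finite (schroeder_paths n)"
proof (rule finite_subset)
  show "schroeder_paths n \<subseteq> {ps. set ps \<subseteq> UNIV \<and> length ps \<le> 2 * n}"
  proof (intro subsetI CollectI conjI)
    fix ps assume "ps \<in> schroeder_paths n"
    then show "length ps \<le> 2 * n"
      using length_le_path_width_height[of ps] by (simp add: mem_schroeder_paths)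
  qed simp
  have step_UNIV: "(UNIV :: step set) = {E, N, D}"
    using step.exhaust by blast
  show "finite {ps. set ps \<subseteq> (UNIV :: step set) \<and> length ps \<le> 2 * n}"
    by (rule finite_lists_length_le) (simp add: step_UNIV)
qed

lemma schroeder_paths_0: "schroeder_paths 0 = {[]}"
proof -
  have "ps = []" if "ps \<in> schroeder_paths 0" for ps
    using that length_le_path_width_height[of ps] by (simp add: mem_schroeder_paths)
  then show ?thesis by (auto simp: mem_schroeder_paths)
qed

lemma first_return_split:
  assumes "1 \<le> h" "stays_nonneg h ps" "h + path_height ps \<le> 0"
  shows "\<exists>qs rs. ps = qs @ N # rs \<and> stays_nonneg (h - 1) qs \<and> h + path_height qs = 1"
  using assms
proof (induction ps arbitrary: h)
  case (Cons s ps)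
  show ?case
  proof (cases "s = N \<and> h = 1")
    case True
    then show ?thesis by (intro exI[of _ "[]"] exI[of _ ps]) auto
  next
    case False
    with Cons.prems have "1 \<le> h + step_height s" "stays_nonneg (h + step_height s) ps"
        "h + step_height s + path_height ps \<le> 0"
      by (cases s; simp add: algebra_simps)+
    then obtain qs rs where "ps = qs @ N # rs" "stays_nonneg (h + step_height s - 1) qs"
        "h + step_height s + path_height qs = 1"
      using Cons.IH by blast
    with Cons.prems show ?thesis
      by (intro exI[of _ "s # qs"] exI[of _ rs]) (auto simp: algebra_simps)
  qed
qed simp

lemma first_return_unique:
  assumes "stays_nonneg h qs" "h + path_height qs = 0" "stays_nonneg h qs'" "h + path_height qs' = 0"
    and "qs @ N # rs = qs' @ N # rs'"
  shows "qs = qs' \<and> rs = rs'"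
  using assms
proof (induction qs arbitrary: h qs')
  case Nil
  then show ?case
    by (cases qs') (auto simp: stays_nonneg_append dest: stays_nonneg_start)
next
  case (Cons s qs)
  then show ?case
    by (cases qs') (auto simp: algebra_simps dest: stays_nonneg_start)
qed

definition first_return_join :: "step list \<times> step list \<Rightarrow> step list" where
  "first_return_join qrs = E # fst qrs @ N # snd qrs"

lemma schroeder_paths_SucE:
  assumes "ps \<in> schroeder_paths (Suc n)"
  obtains ps' where "ps = D # ps'" "ps' \<in> schroeder_paths n"
  | b qs rs where "b \<le> n" "qs \<in> schroeder_paths b" "rs \<in> schroeder_paths (n - b)"
      "ps = first_return_join (qs, rs)"
proof -
  from assms have width: "path_width ps = Suc n" and height: "path_height ps = 0"
    and nonneg: "stays_nonneg 0 ps"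
    by (simp_all add: mem_schroeder_paths)
  then obtain s ps' where ps: "ps = s # ps'"
    by (cases ps) auto
  consider "s = D" | "s = E"
    using nonneg ps by (cases s) (auto dest: stays_nonneg_start)
  then show ?thesis
  proof cases
    case 1
    with width height nonneg ps show ?thesis
      using that(1) by (simp add: mem_schroeder_paths)
  next
    case 2
    with nonneg height ps have "stays_nonneg 1 ps'" "1 + path_height ps' \<le> 0"
      by simp_all
    then obtain qs rs where split: "ps' = qs @ N # rs" "stays_nonneg 0 qs" "path_height qs = 0"
      using first_return_split[of 1 ps'] by auto
    with \<open>stays_nonneg 1 ps'\<close> have "stays_nonneg 0 rs"
      by (simp add: stays_nonneg_append)
    moreover have "path_height rs = 0" "path_width qs + path_width rs = n"
      using width height ps 2 split by simp_all
    moreover have "ps = first_return_join (qs, rs)"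
      using ps 2 split by (simp add: first_return_join_def)
    ultimately show ?thesis
      using that(2)[of "path_width qs" qs rs] split by (simp add: mem_schroeder_paths)
  qed
qed

lemma schroeder_paths_Suc:
  "schroeder_paths (Suc n) = Cons D ` schroeder_paths n \<union>
     (\<Union>b\<le>n. first_return_join ` (schroeder_paths b \<times> schroeder_paths (n - b)))"
proof (intro equalityI subsetI)
  fix ps assume "ps \<in> schroeder_paths (Suc n)"
  then show "ps \<in> Cons D ` schroeder_paths n \<union>
      (\<Union>b\<le>n. first_return_join ` (schroeder_paths b \<times> schroeder_paths (n - b)))"
    by (cases rule: schroeder_paths_SucE) auto
next
  have "first_return_join (qs, rs) \<in> schroeder_paths (Suc n)"
    if "b \<le> n" "qs \<in> schroeder_paths b" "rs \<in> schroeder_paths (n - b)" for b qs rs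
  proof -
    from that(2) have "stays_nonneg 1 qs"
      by (auto simp: mem_schroeder_paths intro: stays_nonneg_mono)
    with that show ?thesis
      by (auto simp: mem_schroeder_paths first_return_join_def stays_nonneg_append)
  qed
  then show "ps \<in> schroeder_paths (Suc n)"
    if "ps \<in> Cons D ` schroeder_paths n \<union>
      (\<Union>b\<le>n. first_return_join ` (schroeder_paths b \<times> schroeder_paths (n - b)))" for ps
    using that by (auto simp: mem_schroeder_paths)
qed

lemma first_return_join_inj:
  assumes "qs \<in> schroeder_paths b" "qs' \<in> schroeder_paths b'"
    and "first_return_join (qs, rs) = first_return_join (qs', rs')"
  shows "qs = qs' \<and> rs = rs'"
  using assms first_return_unique[of 0 qs qs' rs rs']
  by (simp add: mem_schroeder_paths first_return_join_def)

lemma schroeder_0: "schroeder 0 = 1"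
  by (simp add: schroeder_def schroeder_paths_0)

lemma schroeder_Suc: "schroeder (Suc n) = schroeder n + (\<Sum>b\<le>n. schroeder b * schroeder (n - b))"
proof -
  let ?returns = "\<lambda>b. first_return_join ` (schroeder_paths b \<times> schroeder_paths (n - b))"
  have finite_returns: "finite (?returns b)" for b
    by (simp add: finite_schroeder_paths)
  have inj: "inj_on first_return_join (schroeder_paths b \<times> schroeder_paths (n - b))" for b
    by (auto simp: inj_on_def dest: first_return_join_inj)
  have "?returns b \<inter> ?returns b' = {}" if "b \<noteq> b'" for b b'
  proof -
    have "b = b'" if "qs \<in> schroeder_paths b" "qs' \<in> schroeder_paths b'"
      and "first_return_join (qs, rs) = first_return_join (qs', rs')" for qs rs qs' rs'
      using that first_return_join_inj[OF that] by (simp add: mem_schroeder_paths)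
    with \<open>b \<noteq> b'\<close> show ?thesis by blast
  qed
  then have card_returns: "card (\<Union>b\<le>n. ?returns b) = (\<Sum>b\<le>n. card (?returns b))"
    by (intro card_UN_disjoint) (simp_all add: finite_returns)
  have "Cons D ` schroeder_paths n \<inter> (\<Union>b\<le>n. ?returns b) = {}"
    by (auto simp: first_return_join_def)
  then have "schroeder (Suc n) = card (Cons D ` schroeder_paths n) + card (\<Union>b\<le>n. ?returns b)"
    unfolding schroeder_def schroeder_paths_Suc
    by (intro card_Un_disjoint) (simp_all add: finite_schroeder_paths finite_returns)
  also have "\<dots> = schroeder n + (\<Sum>b\<le>n. schroeder b * schroeder (n - b))"
    unfolding card_returns schroeder_def
    by (simp add: card_image inj card_cartesian_product)
  finally show ?thesis .
qed

section \<open>The generating function\<close>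

lemma fps_X_times_geometric_power_nth:
  fixes c :: "'a::comm_semiring_1"
  shows "(fps_X * Abs_fps (\<lambda>i. c ^ i)) ^ Suc k $ Suc m = of_nat (m choose k) * c ^ (m - k)"
proof -
  have geometric_power: "Abs_fps (\<lambda>i. c ^ i) ^ Suc r $ j = of_nat ((r + j) choose j) * c ^ j" for r j
  proof (induction r arbitrary: j)
    case (Suc r)
    have "Abs_fps (\<lambda>i. c ^ i) ^ Suc (Suc r) $ j
        = (Abs_fps (\<lambda>i. c ^ i) ^ Suc r * Abs_fps (\<lambda>i. c ^ i)) $ j"
      by (simp only: power_Suc2[of _ "Suc r"])
    also have "\<dots> = (\<Sum>i=0..j. of_nat ((r + i) choose i) * c ^ i * c ^ (j - i))"
      by (simp only: fps_mult_nth Suc.IH) simp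
    also have "\<dots> = of_nat (\<Sum>i\<le>j. (r + i) choose i) * c ^ j"
      by (simp add: sum_distrib_right atLeast0AtMost mult.assoc flip: power_add)
    also have "\<dots> = of_nat ((Suc r + j) choose j) * c ^ j"
      by (simp add: sum_choose_lower)
    finally show ?case .
  qed simp
  show ?thesis
  proof (cases "k \<le> m")
    case True
    then have "(fps_X * Abs_fps (\<lambda>i. c ^ i)) ^ Suc k $ Suc m = Abs_fps (\<lambda>i. c ^ i) ^ Suc k $ (m - k)"
      by (simp only: power_mult_distrib fps_X_power_mult_nth) simp
    also have "\<dots> = of_nat (m choose k) * c ^ (m - k)"
      using True by (simp only: geometric_power) (simp add: binomial_symmetric[OF True, symmetric])
    finally show ?thesis .
  qed (simp only: power_mult_distrib fps_X_power_mult_nth, simp add: binomial_eq_0)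
qed

lemma fps_mult_compose_nth:
  fixes f g h :: "'a::comm_ring_1 fps"
  assumes "g $ 0 = 0"
  shows "(f * (h oo g)) $ n = (\<Sum>i=0..n. h $ i * (f * g ^ i) $ n)"
proof -
  have vanish: "g ^ i $ (n - m) = 0" if "i \<in> {0..n} - {0..n - m}" for i m
    using startsby_zero_power_prefix[OF assms] that by auto
  have "(f * (h oo g)) $ n = (\<Sum>m=0..n. f $ m * (\<Sum>i=0..n - m. h $ i * g ^ i $ (n - m)))"
    by (simp add: fps_mult_nth fps_compose_nth)
  also have "\<dots> = (\<Sum>m=0..n. f $ m * (\<Sum>i=0..n. h $ i * g ^ i $ (n - m)))"
    by (intro sum.cong refl arg_cong[where f = "(*) _"] sum.mono_neutral_left) (auto simp: vanish)
  also have "\<dots> = (\<Sum>i=0..n. \<Sum>m=0..n. h $ i * (f $ m * g ^ i $ (n - m)))"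
    by (subst sum.swap) (simp add: sum_distrib_left algebra_simps)
  also have "\<dots> = (\<Sum>i=0..n. h $ i * (f * g ^ i) $ n)"
    by (simp add: fps_mult_nth sum_distrib_left)
  finally show ?thesis .
qed

lemma fps_eq_if_square_eq:
  fixes a b :: "'a::{idom,ring_char_0} fps"
  assumes "a ^ 2 = b ^ 2" "a $ 0 = b $ 0" "b $ 0 \<noteq> 0"
  shows "a = b"
proof (rule ccontr)
  assume "a \<noteq> b"
  with assms(1) have "a = - b"
    by (simp add: power2_eq_iff)
  with assms(2) have "b $ 0 + b $ 0 = 0"
    by (metis add.right_inverse fps_neg_nth)
  then have "2 * b $ 0 = 0"
    by (simp only: mult_2)
  with assms(3) show False
    by simp
qed

definition schroeder_fps :: "real fps" where
  "schroeder_fps = Abs_fps (\<lambda>n. real (schroeder n))"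

lemma schroeder_fps_equation: "schroeder_fps = 1 + fps_X * schroeder_fps + fps_X * schroeder_fps ^ 2"
proof (rule fps_ext)
  fix n show "schroeder_fps $ n = (1 + fps_X * schroeder_fps + fps_X * schroeder_fps ^ 2) $ n"
  proof (cases n)
    case (Suc m)
    have "schroeder_fps $ Suc m = schroeder_fps $ m + (schroeder_fps * schroeder_fps) $ m"
      by (simp add: schroeder_fps_def schroeder_Suc fps_mult_nth atLeast0AtMost)
    with Suc show ?thesis by (simp add: power2_eq_square)
  qed (simp add: schroeder_fps_def schroeder_0)
qed

text \<open>The series \<open>(sqrt (1 + y) - 1) / y\<close>.\<close>
definition sqrt_quot :: "real fps" where
  "sqrt_quot = Abs_fps (\<lambda>k. (1/2) gchoose Suc k)"

lemma one_plus_X_sqrt_quot_squared: "(1 + fps_X * sqrt_quot) ^ 2 = 1 + fps_X"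
proof -
  have "1 + fps_X * sqrt_quot = fps_binomial (1/2)"
  proof (rule fps_ext)
    fix n show "(1 + fps_X * sqrt_quot) $ n = fps_binomial (1/2) $ n"
      by (cases n) (simp_all add: sqrt_quot_def)
  qed
  then show ?thesis
    by (simp add: fps_binomial_power fps_binomial_1)
qed

lemma sqrt_quot_compose_squared:
  assumes "G $ 0 = 0"
  shows "(1 + G * (sqrt_quot oo G)) ^ 2 = 1 + G"
proof -
  have "1 + G * (sqrt_quot oo G) = (1 + fps_X * sqrt_quot) oo G"
    by (simp add: assms fps_compose_add_distrib fps_compose_mult_distrib)
  then have "(1 + G * (sqrt_quot oo G)) ^ 2 = (1 + fps_X * sqrt_quot) ^ 2 oo G"
    by (simp only: fps_compose_power[OF assms])
  then show ?thesis
    by (simp add: assms one_plus_X_sqrt_quot_squared fps_compose_add_distrib)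
qed

lemma schroeder_fps_discriminant:
  "(1 - fps_X - 2 * fps_X * schroeder_fps) ^ 2 = 1 - 6 * fps_X + fps_X ^ 2"
proof -
  let ?F = schroeder_fps
  have F_squared: "fps_X * ?F ^ 2 = ?F - 1 - fps_X * ?F"
    using schroeder_fps_equation by (simp add: algebra_simps)
  have "(1 - fps_X - 2 * fps_X * ?F) ^ 2
      = 1 - 2 * fps_X + fps_X ^ 2 - 4 * fps_X * ?F + 4 * fps_X * fps_X * ?F + 4 * fps_X * (fps_X * ?F ^ 2)"
    by (simp add: power2_eq_square algebra_simps)
  then show ?thesis
    unfolding F_squared by (simp add: algebra_simps)
qed

lemma one_minus_3X_times_geometric: "(1 - 3 * fps_X) * Abs_fps (\<lambda>i. 3 ^ i :: real) = 1"
proof (rule fps_ext)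
  fix n show "((1 - 3 * fps_X) * Abs_fps (\<lambda>i. 3 ^ i :: real)) $ n = 1 $ n"
    by (cases n) (simp_all add: algebra_simps numeral_fps_const)
qed

lemma schroeder_fps_closed_form:
  defines "u \<equiv> fps_X * Abs_fps (\<lambda>i. 3 ^ i :: real)"
  shows "schroeder_fps = 1 + 4 * u * (sqrt_quot oo (-8 * u ^ 2))"
proof -
  define F where "F = schroeder_fps"
  define G where "G = -8 * u ^ 2"
  define Q where "Q = 1 + G * (sqrt_quot oo G)"
  have G0: "G $ 0 = 0"
    by (simp add: G_def u_def power2_eq_square)
  have u_geometric: "(1 - 3 * fps_X) * u = fps_X"
    using one_minus_3X_times_geometric by (simp add: u_def mult.left_commute)
  have Q_squared: "Q ^ 2 = 1 + G"
    unfolding Q_def by (rule sqrt_quot_compose_squared[OF G0])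
  have "((1 - 3 * fps_X) * Q) ^ 2 = (1 - 3 * fps_X) ^ 2 - 8 * ((1 - 3 * fps_X) * u) ^ 2"
    by (simp only: power_mult_distrib Q_squared G_def) (simp add: algebra_simps)
  also have "\<dots> = (1 - fps_X - 2 * fps_X * F) ^ 2"
    unfolding u_geometric F_def schroeder_fps_discriminant by (simp add: power2_eq_square algebra_simps)
  finally have "1 - fps_X - 2 * fps_X * F = (1 - 3 * fps_X) * Q"
    by (rule fps_eq_if_square_eq[OF sym]) (simp_all add: Q_def G0)
  also have "\<dots> = 1 - 3 * fps_X - 8 * ((1 - 3 * fps_X) * u) * u * (sqrt_quot oo G)"
    by (simp add: Q_def G_def power2_eq_square algebra_simps)
  also have "\<dots> = 1 - 3 * fps_X - 8 * fps_X * u * (sqrt_quot oo G)"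
    by (simp only: u_geometric)
  finally have "fps_X * (2 * F) = fps_X * (2 + 8 * u * (sqrt_quot oo G))"
    by (simp add: algebra_simps)
  then have "2 * F = 2 + 8 * u * (sqrt_quot oo G)"
    by (simp only: mult_cancel_left fps_X_neq_zero simp_thms)
  also have "\<dots> = 2 * (1 + 4 * u * (sqrt_quot oo G))"
    by (simp add: algebra_simps)
  finally show ?thesis
    unfolding F_def G_def by (simp only: mult_cancel_left) simp
qed

section \<open>Catalan numbers and an explicit formula\<close>

lemma central_binomial_Suc:
  "(n + 1) * (2 * n + 2 choose (n + 1)) = 2 * (2 * n + 1) * (2 * n choose n)"
proof -
  have a: "(n + 1) * (2 * n + 2 choose (n + 1)) = (2 * n + 2) * (2 * n + 1 choose n)"
    using Suc_times_binomial[of n "2 * n + 1"] by simp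
  have b: "(n + 1) * (2 * n + 1 choose (n + 1)) = (2 * n + 1) * (2 * n choose n)"
    using Suc_times_binomial[of n "2 * n"] by simp
  have c: "2 * n + 1 choose n = 2 * n + 1 choose (n + 1)"
    using binomial_symmetric[of n "2 * n + 1"] by (simp add: numeral_2_eq_2)
  have "(n + 1) * ((n + 1) * (2 * n + 2 choose (n + 1)))
      = (2 * n + 2) * ((n + 1) * (2 * n + 1 choose (n + 1)))"
    unfolding a c by (simp add: algebra_simps)
  also have "\<dots> = (n + 1) * (2 * (2 * n + 1) * (2 * n choose n))"
    unfolding b by (simp add: algebra_simps)
  finally show ?thesis
    by (metis mult_left_cancel add_is_0 one_neq_zero)
qed

lemma central_binomial_bound: "1 \<le> j \<Longrightarrow> (2 * j + 1) * (2 * j choose j) < 9 ^ j"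
proof (induction j rule: dec_induct)
  case (step j)
  have "(j + 1) * (4 * (2 * j choose j)) = 2 * (2 * j + 1) * (2 * j choose j) + 2 * (2 * j choose j)"
    by (simp add: algebra_simps)
  then have "(j + 1) * (2 * j + 2 choose (j + 1)) \<le> (j + 1) * (4 * (2 * j choose j))"
    unfolding central_binomial_Suc by linarith
  then have "2 * j + 2 choose (j + 1) \<le> 4 * (2 * j choose j)"
    by (simp only: mult_le_cancel1)
  then have "(2 * j + 3) * (2 * j + 2 choose (j + 1)) \<le> (2 * j + 3) * (4 * (2 * j choose j))"
    by (rule mult_le_mono2)
  also have "\<dots> \<le> 9 * ((2 * j + 1) * (2 * j choose j))"
  proof -
    have "(2 * j + 3) * 4 \<le> 9 * (2 * j + 1)"
      using \<open>1 \<le> j\<close> by simp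
    then have "(2 * j + 3) * 4 * (2 * j choose j) \<le> 9 * (2 * j + 1) * (2 * j choose j)"
      by (rule mult_right_mono) simp
    then show ?thesis
      by (simp only: mult.assoc)
  qed
  also have "\<dots> < 9 * 9 ^ j"
    using step.IH by simp
  finally have "(2 * j + 3) * (2 * j + 2 choose (j + 1)) < 9 * 9 ^ j" .
  moreover have "2 * Suc j + 1 = 2 * j + 3" "2 * Suc j = 2 * j + 2" "Suc j = j + 1"
    "(9 :: nat) ^ Suc j = 9 * 9 ^ j"
    by simp_all
  ultimately show ?case
    by (simp only:)
qed (simp add: numeral_2_eq_2)

lemma catalan_mult_Suc: "catalan n * (n + 1) = 2 * n choose n"
proof -
  have split: "2 * n + 1 choose (n + 1) = (2 * n choose n) + (2 * n choose (n + 1))"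
    by simp
  have "(n + 1) * (2 * n + 1 choose (n + 1)) = (2 * n + 1) * (2 * n choose n)"
    using Suc_times_binomial[of n "2 * n"] by simp
  then have "(n + 1) * (2 * n choose (n + 1)) = n * (2 * n choose n)"
    unfolding split by (simp add: algebra_simps)
  then have "(n + 1) * ((2 * n choose n) - (2 * n choose (n + 1))) = 2 * n choose n"
    by (simp add: diff_mult_distrib2)
  then have "n + 1 dvd 2 * n choose n"
    by (metis dvd_triv_left)
  then show ?thesis
    unfolding catalan_def by (rule dvd_div_mult_self)
qed

lemma catalan_neq_0 [simp]: "catalan n \<noteq> 0"
proof
  assume "catalan n = 0"
  then have "2 * n choose n = 0"
    by (simp flip: catalan_mult_Suc)
  then show False
    by simp
qed

lemma catalan_Suc: "(n + 2) * catalan (n + 1) = 2 * (2 * n + 1) * catalan n"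
proof -
  have "(n + 1) * ((n + 2) * catalan (n + 1)) = (n + 1) * (catalan (n + 1) * (n + 1 + 1))"
    by (simp add: algebra_simps)
  also have "\<dots> = (n + 1) * (2 * n + 2 choose (n + 1))"
    by (simp only: catalan_mult_Suc) simp
  also have "\<dots> = 2 * (2 * n + 1) * (catalan n * (n + 1))"
    by (simp only: central_binomial_Suc catalan_mult_Suc)
  also have "\<dots> = (n + 1) * (2 * (2 * n + 1) * catalan n)"
    by (simp only: mult_ac)
  finally show ?thesis
    by (metis mult_left_cancel add_is_0 one_neq_zero)
qed

lemma real_catalan_fact: "real (catalan n) = fact (2 * n) / (fact n * fact (n + 1))"
proof -
  have "real (catalan n) * real (n + 1) = real (2 * n choose n)"
    by (simp only: catalan_mult_Suc flip: of_nat_mult)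
  also have "\<dots> = fact (2 * n) / (fact n * fact n)"
    using binomial_fact[of n "2 * n", where 'a = real] by (simp add: mult_2)
  finally have "real (catalan n) * real (n + 1) = fact (2 * n) / (fact n * fact n)" .
  then show ?thesis
    by (simp add: field_simps del: of_nat_Suc)
qed

lemma half_gchoose_Suc_eq_catalan:
  "4 * ((1/2 :: real) gchoose (i + 1)) * (-8) ^ i = 2 ^ (i + 1) * real (catalan i)"
proof (induction i)
  case (Suc i)
  let ?g = "\<lambda>k. (1/2 :: real) gchoose k"
  have ratio: "real (i + 2) * ?g (i + 2) = (1/2 - real (i + 1)) * ?g (i + 1)"
    using gbinomial_mult_1[of "1/2 :: real" "i + 1"] by (simp add: algebra_simps)
  have "real (i + 2) * (4 * ?g (i + 2) * (-8) ^ (i + 1))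
      = 4 * (-8) ^ (i + 1) * (real (i + 2) * ?g (i + 2))"
    by (simp only: mult_ac)
  also have "\<dots> = 4 * (-8) ^ (i + 1) * ((1/2 - real (i + 1)) * ?g (i + 1))"
    by (simp only: ratio)
  also have "\<dots> = 4 * real (2 * i + 1) * (4 * ?g (i + 1) * (-8) ^ i)"
    by (simp add: algebra_simps)
  also have "\<dots> = 2 ^ (i + 2) * real ((i + 2) * catalan (i + 1))"
    by (simp only: Suc.IH catalan_Suc) (simp add: algebra_simps)
  also have "\<dots> = real (i + 2) * (2 ^ (i + 2) * real (catalan (i + 1)))"
    by (simp only: of_nat_mult mult_ac)
  finally have "4 * ?g (i + 2) * (-8) ^ (i + 1) = 2 ^ (i + 2) * real (catalan (i + 1))"
    by (rule mult_left_cancel[THEN iffD1, rotated]) simp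
  then show ?case
    by (simp add: numeral_2_eq_2)
qed (simp add: catalan_def)

lemma choose_double_catalan_eq:
  assumes "k \<le> n"
  shows "(2 * n choose 2 * k) * catalan k * (2 * (n - k) choose (n - k))
     = catalan n * (n choose k) * (n + 1 choose (k + 1))"
proof -
  define j where "j = n - k"
  have sums: "2 * k + 2 * j = 2 * n" "k + j = n"
    using assms by (simp_all add: j_def)
  have choose_fact: "real (a + b choose a) = fact (a + b) / (fact a * fact b)" for a b
    using binomial_fact[of a "a + b", where 'a = real] by simp
  have b1: "real (2 * k + 2 * j choose 2 * k) = fact (2 * k + 2 * j) / (fact (2 * k) * fact (2 * j))"
    by (rule choose_fact)
  have b2: "real (2 * j choose j) = fact (2 * j) / (fact j * fact j)"
    using choose_fact[of j j] by (simp add: mult_2)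
  have b3: "real (k + j choose k) = fact (k + j) / (fact k * fact j)"
    by (rule choose_fact)
  have b4: "real (k + j + 1 choose (k + 1)) = fact (k + j + 1) / (fact (k + 1) * fact j)"
    using choose_fact[of "k + 1" j] by (simp add: algebra_simps)
  have c1: "real (catalan k) = fact (2 * k) / (fact k * fact (k + 1))"
    by (simp add: real_catalan_fact)
  have c2: "real (catalan (k + j)) = fact (2 * k + 2 * j) / (fact (k + j) * fact (k + j + 1))"
    by (simp add: real_catalan_fact algebra_simps)
  have f1: "fact (k + 1) = real (k + 1) * fact k" and f2: "fact (k + j + 1) = real (k + j + 1) * fact (k + j)"
    by (simp_all add: fact_Suc)
  have "real (2 * k + 2 * j choose 2 * k) * real (catalan k) * real (2 * j choose j)
     = real (catalan (k + j)) * real (k + j choose k) * real (k + j + 1 choose (k + 1))"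
    unfolding b1 b2 b3 b4 c1 c2 f1 f2 by (simp add: field_simps del: of_nat_add of_nat_Suc)
  then show ?thesis
    unfolding sums j_def[symmetric] by (simp only: of_nat_eq_iff flip: of_nat_mult)
qed

lemma schroeder_Suc_eq_sum:
  "schroeder (Suc m) = (\<Sum>i\<le>m. 2 ^ (i + 1) * catalan i * (m choose (2 * i)) * 3 ^ (m - 2 * i))"
proof -
  define u where "u = fps_X * Abs_fps (\<lambda>i. 3 ^ i :: real)"
  define G where "G = -8 * u ^ 2"
  have G0: "G $ 0 = 0"
    by (simp add: G_def u_def power2_eq_square)
  have term_nth: "4 * (sqrt_quot $ i * (u * G ^ i) $ Suc m)
      = real (2 ^ (i + 1) * catalan i * (m choose (2 * i)) * 3 ^ (m - 2 * i))" for i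
  proof -
    have "G = fps_const (-8) * u ^ 2"
      by (simp add: G_def neg_numeral_fps_const)
    then have "G ^ i = fps_const ((-8) ^ i) * u ^ (2 * i)"
      by (simp only: power_mult_distrib fps_const_power power_mult)
    then have "u * G ^ i = fps_const ((-8) ^ i) * u ^ Suc (2 * i)"
      unfolding power_Suc by (simp only: mult.left_commute)
    then have "(u * G ^ i) $ Suc m = (-8) ^ i * (real (m choose (2 * i)) * 3 ^ (m - 2 * i))"
      by (simp only: fps_mult_left_const_nth u_def fps_X_times_geometric_power_nth)
    then show ?thesis
      using half_gchoose_Suc_eq_catalan[of i] by (simp add: sqrt_quot_def algebra_simps)
  qed
  have "real (schroeder (Suc m)) = (1 + 4 * u * (sqrt_quot oo G)) $ Suc m"
    unfolding u_def G_def schroeder_fps_closed_form[symmetric] by (simp add: schroeder_fps_def)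
  also have "\<dots> = 4 * (u * (sqrt_quot oo G)) $ Suc m"
    by (simp add: numeral_fps_const mult.assoc)
  also have "\<dots> = (\<Sum>i=0..Suc m. 4 * (sqrt_quot $ i * (u * G ^ i) $ Suc m))"
    by (simp add: fps_mult_compose_nth[OF G0] sum_distrib_left)
  also have "\<dots> = (\<Sum>i\<le>m. real (2 ^ (i + 1) * catalan i * (m choose (2 * i)) * 3 ^ (m - 2 * i)))"
    by (simp add: term_nth atLeast0_atMost_Suc atLeast0AtMost)
  finally show ?thesis
    by (simp only: of_nat_sum [symmetric] of_nat_eq_iff)
qed

section \<open>Three-adic valuations\<close>

lemma multiplicity_add_left_eq:
  fixes a b p :: "'a::factorial_semiring"
  assumes "a \<noteq> 0" "\<not> is_unit p" "p ^ Suc (multiplicity p a) dvd b"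
  shows "multiplicity p (a + b) = multiplicity p a"
proof (rule multiplicity_eqI)
  have "p ^ multiplicity p a dvd b"
    using assms(3) by (rule dvd_trans[rotated]) (simp add: le_imp_power_dvd)
  then show "p ^ multiplicity p a dvd a + b"
    by (simp add: multiplicity_dvd)
  show "\<not> p ^ Suc (multiplicity p a) dvd a + b"
  proof
    assume "p ^ Suc (multiplicity p a) dvd a + b"
    with assms(3) have "p ^ Suc (multiplicity p a) dvd a"
      by (simp add: dvd_add_left_iff)
    with assms(1,2) have "Suc (multiplicity p a) \<le> multiplicity p a"
      by (intro multiplicity_geI)
    then show False
      by simp
  qed
qed

lemma v3_mult: "a \<noteq> 0 \<Longrightarrow> b \<noteq> 0 \<Longrightarrow> v3 (a * b) = v3 a + v3 b"
  unfolding v3_def by (rule prime_elem_multiplicity_mult_distrib) simp_all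

lemma v3_power: "a \<noteq> 0 \<Longrightarrow> v3 (a ^ k) = k * v3 a"
  unfolding v3_def by (rule prime_elem_multiplicity_power_distrib) simp_all

lemma v3_3 [simp]: "v3 3 = 1" and v3_2 [simp]: "v3 2 = 0"
  by (simp_all add: v3_def multiplicity_self not_dvd_imp_multiplicity_0)

lemma v3_add_sum:
  assumes "a \<noteq> 0" "\<And>i. i \<in> A \<Longrightarrow> v3 a < v3 (f i) \<or> f i = 0"
  shows "v3 (a + sum f A) = v3 a"
proof -
  have "3 ^ Suc (v3 a) dvd f i" if "i \<in> A" for i
  proof (cases "f i = 0")
    case False
    with assms(2)[OF that] have "Suc (v3 a) \<le> v3 (f i)"
      by simp
    then show ?thesis
      unfolding v3_def by (rule multiplicity_dvd')
  qed simp
  then show ?thesis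
    unfolding v3_def using assms(1) by (intro multiplicity_add_left_eq dvd_sum) simp_all
qed

lemma v3_less_double: "a \<noteq> 0 \<Longrightarrow> a < 9 ^ j \<Longrightarrow> v3 a < 2 * j"
proof -
  assume "a \<noteq> 0" "a < 9 ^ j"
  then have "3 ^ v3 a < (3 :: nat) ^ (2 * j)"
    using dvd_imp_le[OF multiplicity_dvd[of 3 a]] by (simp add: v3_def power_mult)
  then show ?thesis
    by (simp add: power_strict_increasing_iff)
qed

lemma v3_catalan_le:
  assumes "i \<le> n"
  shows "v3 (catalan n) \<le> v3 (2 * n choose 2 * i) + v3 (catalan i) + v3 (2 * (n - i) choose (n - i))"
proof -
  have "v3 (catalan n) \<le> v3 (catalan n * (n choose i) * (n + 1 choose (i + 1)))"
    using assms by (simp add: v3_mult del: binomial_Suc_Suc)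
  also have "\<dots> = v3 ((2 * n choose 2 * i) * catalan i * (2 * (n - i) choose (n - i)))"
    by (simp only: choose_double_catalan_eq[OF assms])
  also have "\<dots> = v3 (2 * n choose 2 * i) + v3 (catalan i) + v3 (2 * (n - i) choose (n - i))"
    using assms by (simp add: v3_mult)
  finally show ?thesis .
qed

lemma v3_odd_choose_absorb:
  assumes "i \<le> n"
  shows "v3 (2 * (n - i) + 1) + v3 (2 * n + 1 choose 2 * i) = v3 (2 * n + 1) + v3 (2 * n choose 2 * i)"
proof -
  have "2 * n + 1 - 2 * i = 2 * (n - i) + 1" "2 * n + 1 - 1 = 2 * n"
    using assms by simp_all
  then have absorb: "(2 * (n - i) + 1) * (2 * n + 1 choose 2 * i) = (2 * n + 1) * (2 * n choose 2 * i)"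
    using binomial_absorb_comp[of "2 * n + 1" "2 * i"] by (simp only:)
  have "v3 (2 * (n - i) + 1) + v3 (2 * n + 1 choose 2 * i) = v3 ((2 * (n - i) + 1) * (2 * n + 1 choose 2 * i))"
    using assms by (intro v3_mult[symmetric]) simp_all
  also have "\<dots> = v3 ((2 * n + 1) * (2 * n choose 2 * i))"
    unfolding absorb ..
  also have "\<dots> = v3 (2 * n + 1) + v3 (2 * n choose 2 * i)"
    using assms by (intro v3_mult) simp_all
  finally show ?thesis .
qed

lemma v3_schroeder_term_gt:
  assumes "i < n" "r \<le> 1"
  shows "v3 (catalan n) + r * (1 + v3 (2 * n + 1))
    < v3 (2 ^ (i + 1) * catalan i * (2 * n + r choose 2 * i) * 3 ^ (2 * n + r - 2 * i))"
proof -
  define j where "j = n - i"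
  have "1 \<le> j" "i \<le> n"
    using assms(1) by (simp_all add: j_def)
  define w where "w = (2 * j + 1) ^ r * (2 * j choose j)"
  have "w \<le> (2 * j + 1) * (2 * j choose j)"
    using assms(2) by (cases r) (simp_all add: w_def)
  with central_binomial_bound[OF \<open>1 \<le> j\<close>] have "v3 w < 2 * j"
    by (intro v3_less_double) (simp_all add: w_def)
  moreover have "v3 (catalan n) + r * v3 (2 * n + 1) \<le> v3 w + v3 (2 * n + r choose 2 * i) + v3 (catalan i)"
  proof (cases "r = 0")
    case True
    then show ?thesis
      using v3_catalan_le[OF \<open>i \<le> n\<close>, folded j_def] by (simp add: w_def)
  next
    case False
    with assms(2) have "r = 1"
      by simp
    have "v3 w = v3 (2 * j + 1) + v3 (2 * j choose j)"
      unfolding w_def \<open>r = 1\<close> power_one_right by (intro v3_mult) simp_all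
    then show ?thesis
      using v3_catalan_le[OF \<open>i \<le> n\<close>, folded j_def]
        v3_odd_choose_absorb[OF \<open>i \<le> n\<close>, folded j_def]
      unfolding \<open>r = 1\<close> mult_1 by linarith
  qed
  moreover have "v3 (2 ^ (i + 1) * catalan i * (2 * n + r choose 2 * i) * 3 ^ (2 * n + r - 2 * i))
      = v3 (catalan i) + v3 (2 * n + r choose 2 * i) + (2 * j + r)"
    using assms by (simp add: v3_mult v3_power j_def del: binomial_Suc_Suc)
  ultimately show ?thesis
    by (simp add: algebra_simps)
qed

lemma v3_schroeder:
  assumes "r \<le> 1"
  shows "v3 (schroeder (2 * n + r + 1)) = v3 (catalan n) + r * (1 + v3 (2 * n + 1))"
proof -
  define t where "t i = 2 ^ (i + 1) * catalan i * (2 * n + r choose 2 * i) * 3 ^ (2 * n + r - 2 * i)" for i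
  have "schroeder (2 * n + r + 1) = (\<Sum>i\<le>2 * n + r. t i)"
    by (simp add: schroeder_Suc_eq_sum t_def)
  also have "\<dots> = (\<Sum>i\<le>n. t i)"
    using assms by (intro sum.mono_neutral_right) (auto simp: t_def)
  also have "\<dots> = t n + (\<Sum>i<n. t i)"
    by (simp add: lessThan_Suc_atMost [symmetric])
  finally have split: "schroeder (2 * n + r + 1) = t n + (\<Sum>i<n. t i)" .
  have "2 * n + r choose 2 * n = (2 * n + 1) ^ r"
    using assms by (cases r) simp_all
  then have "t n = 2 ^ (n + 1) * catalan n * (2 * n + 1) ^ r * 3 ^ r"
    by (simp add: t_def)
  then have "v3 (t n) = v3 (catalan n) + r * (1 + v3 (2 * n + 1))"
    by (simp add: v3_mult v3_power algebra_simps)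
  moreover have "v3 (t n) < v3 (t i)" if "i < n" for i
    using v3_schroeder_term_gt[OF that assms] \<open>v3 (t n) = _\<close> by (simp add: t_def)
  ultimately show ?thesis
    unfolding split by (subst v3_add_sum) (auto simp: t_def)
qed

theorem theorem6:
  fixes n :: nat
  shows "v3 (schroeder (2 * n + 1)) = v3 (catalan n)
    \<and> v3 (schroeder (2 * n + 2)) = 1 + v3 (2 * n + 1) + v3 (catalan n)"
  using v3_schroeder[of 0 n] v3_schroeder[of 1 n] by (simp add: algebra_simps)

end
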